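(* Let $G_1,\dots,G_\ell$ be pairwise vertex-disjoint threshold graphs. Then their disjoint union satisfies $q(G_1\cup\cdots\cup G_\ell)\le 4$.
   Context: A threshold graph is a (simple, not necessarily connected) graph obtained from a single vertex by repeatedly adding either a new isolated vertex or a new dominating vertex (a vertex adjacent to all previously added vertices). For a simple graph $G$ on vertices $v_1,\dots,v_n$, $S(G)$ denotes the set of all real symmetric $n\times n$ matrices $A=(a_{ij})$ such that for all $i\neq j$, $a_{ij}\neq 0$ if and only if $\{v_i,v_j\}$ is an edge of $G$ (diagonal entries are arbitrary). For a square matrix $A$, $\mathrm{DSpec}(A)$ is the set of distinct eigenvalues of $A$, and $q(G)=\min\{|\mathrm{DSpec}(A)| : A\in S(G)\}$. The union $G_1\cup\cdots\cup G_\ell$ of vertex-disjoint graphs has vertex set and edge set equal to the unions of the respective vertex sets and edge sets. *)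

theory Defs
  imports Complex_Main
begin

type_synonym 'a graph = "'a set \<times> 'a set set"

definition verts :: "'a graph \<Rightarrow> 'a set" where "verts G = fst G"
definition edges :: "'a graph \<Rightarrow> 'a set set" where "edges G = snd G"

inductive threshold :: "'a graph \<Rightarrow> bool" where
  single: "threshold ({v}, {})"
| isolated: "threshold (V, E) \<Longrightarrow> v \<notin> V \<Longrightarrow> threshold (insert v V, E)"
| dominating: "threshold (V, E) \<Longrightarrow> v \<notin> V \<Longrightarrow>
     threshold (insert v V, E \<union> {{v, u} | u. u \<in> V})"

definition graph_Union :: "nat \<Rightarrow> (nat \<Rightarrow> 'a graph) \<Rightarrow> 'a graph" where
  "graph_Union l Gs = ((\<Union>i<l. verts (Gs i)), (\<Union>i<l. edges (Gs i)))"

text \<open>Real square matrices indexed by the (finite) vertex set V are modelled as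
  functions 'a \<Rightarrow> 'a \<Rightarrow> real, of which only the entries in V \<times> V matter.\<close>

definition S :: "'a graph \<Rightarrow> ('a \<Rightarrow> 'a \<Rightarrow> real) set" where
  "S G = {A. (\<forall>i\<in>verts G. \<forall>j\<in>verts G. A i j = A j i) \<and>
             (\<forall>i\<in>verts G. \<forall>j\<in>verts G. i \<noteq> j \<longrightarrow> (A i j \<noteq> 0 \<longleftrightarrow> {i, j} \<in> edges G))}"

definition is_eigenvalue :: "'a set \<Rightarrow> ('a \<Rightarrow> 'a \<Rightarrow> real) \<Rightarrow> real \<Rightarrow> bool" where
  "is_eigenvalue V A mu \<longleftrightarrow>
     (\<exists>x::'a \<Rightarrow> real. (\<exists>i\<in>V. x i \<noteq> 0) \<and> (\<forall>i\<in>V. (\<Sum>j\<in>V. A i j * x j) = mu * x i))"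

definition DSpec :: "'a set \<Rightarrow> ('a \<Rightarrow> 'a \<Rightarrow> real) \<Rightarrow> real set" where
  "DSpec V A = {mu. is_eigenvalue V A mu}"

definition q :: "'a graph \<Rightarrow> nat" where
  "q G = (LEAST k. \<exists>A\<in>S G. card (DSpec (verts G) A) = k)"

end

theory Submission
  imports Defs
begin

text \<open>
  Each threshold graph G has a realization A \<in> S(G) with spectrum in {0, 1, 2, 3} together
  with an eigenvalue \<mu> \<in> {1, 2} that has a nowhere-zero eigenvector. An isolated vertex is
  added as a 1\<times>1 diagonal block \<mu>. A dominating vertex v is added by bordering A with a unit
  \<mu>-eigenvector b and putting \<mu> in the corner: an eigenvector of the bordered matrix is
  either an eigenvector of A (if it vanishes at v) or has eigenvalue \<mu> \<plusminus> 1, and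
  (b, \<plusminus>1) is a nowhere-zero eigenvector for \<mu> \<plusminus> 1; choosing the sign 3 - 2\<mu>
  keeps the spectrum in {0, 1, 2, 3} and moves \<mu> to 3 - \<mu> \<in> {1, 2}. A disjoint union
  of graphs is realized by the block diagonal matrix, whose spectrum is the union of the
  spectra of the blocks, so at most 4 distinct eigenvalues occur.
\<close>

definition eigen_equation :: "'a set \<Rightarrow> ('a \<Rightarrow> 'a \<Rightarrow> real) \<Rightarrow> real \<Rightarrow> ('a \<Rightarrow> real) \<Rightarrow> bool" where
  "eigen_equation V A mu x \<longleftrightarrow> (\<forall>i\<in>V. (\<Sum>j\<in>V. A i j * x j) = mu * x i)"

lemma is_eigenvalue_iff_eigen_equation:
  "is_eigenvalue V A mu \<longleftrightarrow> (\<exists>x. (\<exists>i\<in>V. x i \<noteq> 0) \<and> eigen_equation V A mu x)"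
  unfolding is_eigenvalue_def eigen_equation_def ..

lemma is_eigenvalue_cong:
  assumes "\<forall>i\<in>V. \<forall>j\<in>V. A i j = B i j"
  shows "is_eigenvalue V A mu \<longleftrightarrow> is_eigenvalue V B mu"
  using assms unfolding is_eigenvalue_def by simp

lemma DSpec_empty: "DSpec {} A = {}"
  unfolding DSpec_def is_eigenvalue_def by simp

lemma DSpec_singleton: "DSpec {v} A = {A v v}"
  unfolding DSpec_def is_eigenvalue_def by (auto intro!: exI[of _ "\<lambda>_. 1"])

lemma is_eigenvalue_restrict:
  assumes "finite V" "W \<subseteq> V" "\<forall>i\<in>W. \<forall>j\<in>V - W. A i j = 0"
    and "eigen_equation V A mu x" "\<exists>i\<in>W. x i \<noteq> 0"
  shows "is_eigenvalue W A mu"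
  unfolding is_eigenvalue_iff_eigen_equation
proof (intro exI conjI)
  show "eigen_equation W A mu x"
    unfolding eigen_equation_def
  proof
    fix i assume "i \<in> W"
    then have "(\<Sum>j\<in>W. A i j * x j) = (\<Sum>j\<in>V. A i j * x j)"
      using assms(1-3) by (intro sum.mono_neutral_left) auto
    also have "\<dots> = mu * x i"
      using \<open>i \<in> W\<close> assms(2,4) unfolding eigen_equation_def by auto
    finally show "(\<Sum>j\<in>W. A i j * x j) = mu * x i" .
  qed
qed (use assms(5) in blast)

lemma eigen_equation_scale:
  "eigen_equation V A mu x \<Longrightarrow> eigen_equation V A mu (\<lambda>i. c * x i)"
  unfolding eigen_equation_def
  by (simp add: sum_distrib_left[symmetric] mult.left_commute)

lemma eigen_equation_inner_symmetric:
  assumes "\<forall>i\<in>V. \<forall>j\<in>V. A i j = A j i" "eigen_equation V A mu b"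
  shows "(\<Sum>i\<in>V. b i * (\<Sum>j\<in>V. A i j * z j)) = mu * (\<Sum>j\<in>V. b j * z j)"
proof -
  have "(\<Sum>i\<in>V. b i * (\<Sum>j\<in>V. A i j * z j)) = (\<Sum>j\<in>V. (\<Sum>i\<in>V. A j i * b i) * z j)"
    unfolding sum_distrib_left sum_distrib_right
    using assms(1) by (subst sum.swap) (auto intro!: sum.cong)
  also have "\<dots> = mu * (\<Sum>j\<in>V. b j * z j)"
    using assms(2) unfolding eigen_equation_def
    by (simp add: sum_distrib_left mult.assoc)
  finally show ?thesis .
qed

lemma exists_unit_rescaling:
  fixes x :: "'a \<Rightarrow> real"
  assumes "finite V" "\<exists>i\<in>V. x i \<noteq> 0"
  obtains c where "c \<noteq> 0" "(\<Sum>i\<in>V. (c * x i)\<^sup>2) = 1"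
proof
  obtain i where "i \<in> V" "x i \<noteq> 0" using assms(2) by blast
  then have "0 < (x i)\<^sup>2" by simp
  also have "\<dots> \<le> (\<Sum>i\<in>V. (x i)\<^sup>2)"
    using \<open>i \<in> V\<close> assms(1) by (intro member_le_sum) auto
  finally have pos: "0 < (\<Sum>i\<in>V. (x i)\<^sup>2)" .
  show "1 / sqrt (\<Sum>i\<in>V. (x i)\<^sup>2) \<noteq> 0" using pos by simp
  show "(\<Sum>i\<in>V. (1 / sqrt (\<Sum>i\<in>V. (x i)\<^sup>2) * x i)\<^sup>2) = 1"
    using pos by (simp add: power_mult_distrib power_divide sum_divide_distrib[symmetric])
qed

lemma verts_pair [simp]: "verts (V, E) = V" and edges_pair [simp]: "edges (V, E) = E"
  by (simp_all add: verts_def edges_def)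

lemma mem_S_iff:
  "A \<in> S (V, E) \<longleftrightarrow> (\<forall>i\<in>V. \<forall>j\<in>V. A i j = A j i) \<and>
     (\<forall>i\<in>V. \<forall>j\<in>V. i \<noteq> j \<longrightarrow> (A i j \<noteq> 0 \<longleftrightarrow> {i, j} \<in> E))"
  by (simp add: S_def verts_def edges_def)

definition block_sum :: "'a set \<Rightarrow> ('a \<Rightarrow> 'a \<Rightarrow> real) \<Rightarrow> ('a \<Rightarrow> 'a \<Rightarrow> real) \<Rightarrow> 'a \<Rightarrow> 'a \<Rightarrow> real" where
  "block_sum V A B i j =
     (if i \<in> V \<and> j \<in> V then A i j else if i \<notin> V \<and> j \<notin> V then B i j else 0)"

lemma block_sum_apply:
  "i \<in> V \<Longrightarrow> j \<in> V \<Longrightarrow> block_sum V A B i j = A i j"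
  "i \<notin> V \<Longrightarrow> j \<notin> V \<Longrightarrow> block_sum V A B i j = B i j"
  "i \<in> V \<Longrightarrow> j \<notin> V \<Longrightarrow> block_sum V A B i j = 0"
  "i \<notin> V \<Longrightarrow> j \<in> V \<Longrightarrow> block_sum V A B i j = 0"
  by (simp_all add: block_sum_def)

lemma block_sum_in_S:
  assumes "V \<inter> W = {}" "\<forall>e\<in>E. e \<subseteq> V" "\<forall>e\<in>F. e \<subseteq> W"
    and "A \<in> S (V, E)" "B \<in> S (W, F)"
  shows "block_sum V A B \<in> S (V \<union> W, E \<union> F)"
  unfolding mem_S_iff
proof (intro conjI ballI impI)
  fix i j assume "i \<in> V \<union> W" "j \<in> V \<union> W"
  then show "block_sum V A B i j = block_sum V A B j i"
    using assms(1,4,5) unfolding mem_S_iff block_sum_def by auto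
next
  fix i j assume ij: "i \<in> V \<union> W" "j \<in> V \<union> W" "i \<noteq> j"
  have "{i, j} \<in> E \<Longrightarrow> i \<in> V \<and> j \<in> V" "{i, j} \<in> F \<Longrightarrow> i \<in> W \<and> j \<in> W"
    using assms(2,3) by auto
  then show "block_sum V A B i j \<noteq> 0 \<longleftrightarrow> {i, j} \<in> E \<union> F"
    using ij assms(1,4,5) unfolding mem_S_iff block_sum_def by auto
qed

lemma DSpec_block_sum:
  assumes "finite V" "finite W" "V \<inter> W = {}"
  shows "DSpec (V \<union> W) (block_sum V A B) \<subseteq> DSpec V A \<union> DSpec W B"
proof
  fix mu assume "mu \<in> DSpec (V \<union> W) (block_sum V A B)"
  then obtain x where nz: "\<exists>i\<in>V \<union> W. x i \<noteq> 0"
    and eq: "eigen_equation (V \<union> W) (block_sum V A B) mu x"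
    unfolding DSpec_def is_eigenvalue_iff_eigen_equation by blast
  have fin: "finite (V \<union> W)" using assms by simp
  have W_out: "i \<in> W \<Longrightarrow> i \<notin> V" for i using assms(3) by blast
  consider "\<exists>i\<in>V. x i \<noteq> 0" | "\<exists>i\<in>W. x i \<noteq> 0" using nz by blast
  then show "mu \<in> DSpec V A \<union> DSpec W B"
  proof cases
    case 1
    have "\<forall>i\<in>V. \<forall>j\<in>V \<union> W - V. block_sum V A B i j = 0"
      by (simp add: block_sum_apply)
    then have "is_eigenvalue V (block_sum V A B) mu"
      using fin eq 1 by (intro is_eigenvalue_restrict[of "V \<union> W"]) auto
    moreover have "\<forall>i\<in>V. \<forall>j\<in>V. block_sum V A B i j = A i j"
      by (simp add: block_sum_apply)
    ultimately have "is_eigenvalue V A mu" using is_eigenvalue_cong by blast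
    then show ?thesis by (simp add: DSpec_def)
  next
    case 2
    have "\<forall>i\<in>W. \<forall>j\<in>V \<union> W - W. block_sum V A B i j = 0"
      using W_out by (auto simp: block_sum_apply)
    then have "is_eigenvalue W (block_sum V A B) mu"
      using fin eq 2 by (intro is_eigenvalue_restrict[of "V \<union> W"]) auto
    moreover have "\<forall>i\<in>W. \<forall>j\<in>W. block_sum V A B i j = B i j"
      using W_out by (simp add: block_sum_apply)
    ultimately have "is_eigenvalue W B mu" using is_eigenvalue_cong by blast
    then show ?thesis by (simp add: DSpec_def)
  qed
qed

lemma eigen_equation_block_sum:
  assumes "finite V" "finite W" "V \<inter> W = {}"
    and "eigen_equation V A mu x" "eigen_equation W B mu y"
  shows "eigen_equation (V \<union> W) (block_sum V A B) mu (\<lambda>i. if i \<in> V then x i else y i)"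
  unfolding eigen_equation_def
proof
  fix i assume i: "i \<in> V \<union> W"
  let ?z = "\<lambda>i. if i \<in> V then x i else y i"
  have W_out: "j \<in> W \<Longrightarrow> j \<notin> V" for j using assms(3) by blast
  have split: "(\<Sum>j\<in>V \<union> W. block_sum V A B i j * ?z j) =
      (\<Sum>j\<in>V. block_sum V A B i j * x j) + (\<Sum>j\<in>W. block_sum V A B i j * y j)"
    using assms(1-3) W_out by (simp add: sum.union_disjoint cong: sum.cong)
  show "(\<Sum>j\<in>V \<union> W. block_sum V A B i j * ?z j) = mu * ?z i"
  proof (cases "i \<in> V")
    case True
    have "(\<Sum>j\<in>V. block_sum V A B i j * x j) = (\<Sum>j\<in>V. A i j * x j)"
      using True by (simp add: block_sum_apply)
    moreover have "(\<Sum>j\<in>W. block_sum V A B i j * y j) = 0"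
      using True W_out by (simp add: block_sum_apply)
    ultimately show ?thesis
      using split True assms(4) unfolding eigen_equation_def by simp
  next
    case False
    have "(\<Sum>j\<in>V. block_sum V A B i j * x j) = 0"
      using False by (simp add: block_sum_apply)
    moreover have "(\<Sum>j\<in>W. block_sum V A B i j * y j) = (\<Sum>j\<in>W. B i j * y j)"
      using False W_out by (simp add: block_sum_apply)
    ultimately show ?thesis
      using split False i assms(5) unfolding eigen_equation_def by simp
  qed
qed

definition border :: "'a \<Rightarrow> ('a \<Rightarrow> 'a \<Rightarrow> real) \<Rightarrow> ('a \<Rightarrow> real) \<Rightarrow> real \<Rightarrow> 'a \<Rightarrow> 'a \<Rightarrow> real" where
  "border v A b d i j =
     (if i = v \<and> j = v then d else if i = v then b j else if j = v then b i else A i j)"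

lemma border_in_S:
  assumes "v \<notin> V" "\<forall>e\<in>E. e \<subseteq> V" "A \<in> S (V, E)" "\<forall>i\<in>V. b i \<noteq> 0"
  shows "border v A b d \<in> S (insert v V, E \<union> {{v, u} | u. u \<in> V})"
  unfolding mem_S_iff
proof (intro conjI ballI impI)
  fix i j assume "i \<in> insert v V" "j \<in> insert v V"
  then show "border v A b d i j = border v A b d j i"
    using assms(3) unfolding mem_S_iff border_def by auto
next
  fix i j assume ij: "i \<in> insert v V" "j \<in> insert v V" "i \<noteq> j"
  show "border v A b d i j \<noteq> 0 \<longleftrightarrow> {i, j} \<in> E \<union> {{v, u} | u. u \<in> V}"
  proof (cases "i = v \<or> j = v")
    case True
    then show ?thesis using ij assms(4) by (auto simp: border_def)
  next
    case False
    then have "{i, j} \<in> E \<union> {{v, u} | u. u \<in> V} \<longleftrightarrow> {i, j} \<in> E"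
      by (auto simp: doubleton_eq_iff)
    then show ?thesis using False ij assms(3) unfolding mem_S_iff border_def by auto
  qed
qed

lemma eigen_equation_border:
  assumes "finite V" "v \<notin> V" "eigen_equation V A mu b" "(\<Sum>i\<in>V. (b i)\<^sup>2) = 1" "c\<^sup>2 = 1"
  shows "eigen_equation (insert v V) (border v A b mu) (mu + c) (b(v := c))"
  unfolding eigen_equation_def
proof
  fix i assume i: "i \<in> insert v V"
  have row: "(\<Sum>j\<in>insert v V. border v A b mu i j * (b(v := c)) j) =
      border v A b mu i v * c + (\<Sum>j\<in>V. border v A b mu i j * b j)"
    using assms(1,2) by (simp add: sum.insert_if) (auto intro!: sum.cong)
  show "(\<Sum>j\<in>insert v V. border v A b mu i j * (b(v := c)) j) = (mu + c) * (b(v := c)) i"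
  proof (cases "i = v")
    case True
    have "(\<Sum>j\<in>V. border v A b mu v j * b j) = (\<Sum>j\<in>V. (b j)\<^sup>2)"
      using assms(2) by (intro sum.cong) (auto simp: border_def power2_eq_square)
    with assms(4) have "(\<Sum>j\<in>V. border v A b mu v j * b j) = 1" by simp
    then show ?thesis using row True assms(5) by (simp add: border_def power2_eq_square algebra_simps)
  next
    case False
    have "(\<Sum>j\<in>V. border v A b mu i j * b j) = (\<Sum>j\<in>V. A i j * b j)"
      using False assms(2) by (intro sum.cong) (auto simp: border_def)
    also have "\<dots> = mu * b i"
      using False i assms(3) unfolding eigen_equation_def by auto
    finally have "(\<Sum>j\<in>V. border v A b mu i j * b j) = mu * b i" .
    then show ?thesis using row False by (simp add: border_def algebra_simps)
  qed
qed

lemma eigen_equation_borderD: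
  assumes "finite V" "v \<notin> V" "eigen_equation (insert v V) (border v A b d) lam z"
  shows "\<forall>i\<in>V. (\<Sum>j\<in>V. A i j * z j) + b i * z v = lam * z i"
    and "(\<Sum>j\<in>V. b j * z j) + d * z v = lam * z v"
proof -
  have row: "(\<Sum>j\<in>insert v V. border v A b d i j * z j) =
      border v A b d i v * z v + (\<Sum>j\<in>V. border v A b d i j * z j)" for i
    using assms(1,2) by simp
  show "\<forall>i\<in>V. (\<Sum>j\<in>V. A i j * z j) + b i * z v = lam * z i"
  proof
    fix i assume "i \<in> V"
    have "(\<Sum>j\<in>V. border v A b d i j * z j) = (\<Sum>j\<in>V. A i j * z j)"
      using \<open>i \<in> V\<close> assms(2) by (intro sum.cong) (auto simp: border_def)
    then show "(\<Sum>j\<in>V. A i j * z j) + b i * z v = lam * z i"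
      using \<open>i \<in> V\<close> assms(2,3) row[of i] unfolding eigen_equation_def
      by (auto simp: border_def algebra_simps)
  qed
  have "(\<Sum>j\<in>V. border v A b d v j * z j) = (\<Sum>j\<in>V. b j * z j)"
    using assms(2) by (intro sum.cong) (auto simp: border_def)
  then show "(\<Sum>j\<in>V. b j * z j) + d * z v = lam * z v"
    using assms(3) row[of v] unfolding eigen_equation_def by (auto simp: border_def)
qed

text \<open>With s = \<langle>b, z\<rangle> and t = z v, the row of v gives s = (\<lambda> - \<mu>) t, and pairing the
  other rows with b gives (\<lambda> - \<mu>) s = t.\<close>
lemma is_eigenvalue_border:
  assumes "finite V" "v \<notin> V" "\<forall>i\<in>V. \<forall>j\<in>V. A i j = A j i"
    and "eigen_equation V A mu b" "(\<Sum>i\<in>V. (b i)\<^sup>2) = 1"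
    and "is_eigenvalue (insert v V) (border v A b mu) lam"
  shows "is_eigenvalue V A lam \<or> (lam - mu)\<^sup>2 = 1"
proof -
  obtain z where nz: "\<exists>i\<in>insert v V. z i \<noteq> 0"
    and eq: "eigen_equation (insert v V) (border v A b mu) lam z"
    using assms(6) unfolding is_eigenvalue_iff_eigen_equation by blast
  define t where "t = z v"
  define s where "s = (\<Sum>j\<in>V. b j * z j)"
  have rows_V: "\<forall>i\<in>V. (\<Sum>j\<in>V. A i j * z j) + b i * t = lam * z i"
    and row_v: "s + mu * t = lam * t"
    using eigen_equation_borderD[OF assms(1,2) eq] by (simp_all add: s_def t_def)
  show ?thesis
  proof (cases "t = 0")
    case True
    then have "eigen_equation V A lam z" "\<exists>i\<in>V. z i \<noteq> 0"
      using rows_V nz by (auto simp: eigen_equation_def t_def)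
    then show ?thesis unfolding is_eigenvalue_iff_eigen_equation by blast
  next
    case False
    have "mu * s = (\<Sum>i\<in>V. b i * (\<Sum>j\<in>V. A i j * z j))"
      using eigen_equation_inner_symmetric[OF assms(3,4)] by (simp add: s_def)
    also have "\<dots> = (\<Sum>i\<in>V. lam * (b i * z i) - (b i)\<^sup>2 * t)"
    proof (intro sum.cong refl)
      fix i assume "i \<in> V"
      then have "(\<Sum>j\<in>V. A i j * z j) = lam * z i - b i * t"
        using rows_V by (simp add: algebra_simps)
      then show "b i * (\<Sum>j\<in>V. A i j * z j) = lam * (b i * z i) - (b i)\<^sup>2 * t"
        by (simp add: power2_eq_square right_diff_distrib mult.left_commute)
    qed
    also have "\<dots> = lam * s - t"
      using assms(5) by (simp add: s_def sum_subtractf sum_distrib_left sum_distrib_right[symmetric])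
    finally have "(lam - mu) * s = t" by (simp add: algebra_simps)
    moreover have "s = (lam - mu) * t" using row_v by (simp add: algebra_simps)
    ultimately have "(lam - mu)\<^sup>2 * t = 1 * t" by (simp add: power2_eq_square mult.assoc)
    then show ?thesis using False by (metis mult_cancel_right)
  qed
qed

lemma threshold_finite: "threshold G \<Longrightarrow> finite (verts G)"
  by (induction G rule: threshold.induct) simp_all

lemma threshold_edges_subset: "threshold G \<Longrightarrow> \<forall>e\<in>edges G. e \<subseteq> verts G"
  by (induction G rule: threshold.induct) (simp_all, blast+)

lemma threshold_nonempty: "threshold G \<Longrightarrow> verts G \<noteq> {}"
  by (induction G rule: threshold.induct) simp_all

definition spectral_witness :: "'a graph \<Rightarrow> ('a \<Rightarrow> 'a \<Rightarrow> real) \<Rightarrow> real \<Rightarrow> ('a \<Rightarrow> real) \<Rightarrow> bool" where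
  "spectral_witness G A mu x \<longleftrightarrow>
     A \<in> S G \<and> DSpec (verts G) A \<subseteq> {0, 1, 2, 3} \<and> mu \<in> {1, 2} \<and>
     (\<forall>i\<in>verts G. x i \<noteq> 0) \<and> eigen_equation (verts G) A mu x"

lemma spectral_witness_single: "spectral_witness ({v}, {}) (\<lambda>_ _. 1) 1 (\<lambda>_. 1)"
  by (simp add: spectral_witness_def mem_S_iff DSpec_singleton eigen_equation_def)

lemma spectral_witness_isolated:
  assumes "finite V" "\<forall>e\<in>E. e \<subseteq> V" "v \<notin> V" "spectral_witness (V, E) A mu x"
  shows "spectral_witness (insert v V, E)
           (block_sum V A (\<lambda>_ _. mu)) mu (\<lambda>i. if i \<in> V then x i else 1)"
proof -
  from assms(4) have A: "A \<in> S (V, E)" "DSpec V A \<subseteq> {0, 1, 2, 3}" "mu \<in> {1, 2}"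
    "\<forall>i\<in>V. x i \<noteq> 0" "eigen_equation V A mu x"
    by (simp_all add: spectral_witness_def)
  have disj: "V \<inter> {v} = {}" using assms(3) by simp
  let ?A = "block_sum V A (\<lambda>_ _. mu)"
  have "?A \<in> S (V \<union> {v}, E \<union> {})"
    using disj assms(2) A(1) by (intro block_sum_in_S) (auto simp: mem_S_iff)
  moreover have "DSpec (V \<union> {v}) ?A \<subseteq> DSpec V A \<union> DSpec {v} (\<lambda>_ _. mu)"
    using assms(1) disj by (intro DSpec_block_sum) simp_all
  moreover have "eigen_equation (V \<union> {v}) ?A mu (\<lambda>i. if i \<in> V then x i else 1)"
    using disj assms(1) A(5) by (intro eigen_equation_block_sum) (simp_all add: eigen_equation_def)
  ultimately show ?thesis
    using A(2-4) by (auto simp: spectral_witness_def DSpec_singleton)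
qed

lemma spectral_witness_dominating:
  assumes "finite V" "\<forall>e\<in>E. e \<subseteq> V" "V \<noteq> {}" "v \<notin> V" "spectral_witness (V, E) A mu x"
  shows "\<exists>A' mu' x'. spectral_witness (insert v V, E \<union> {{v, u} | u. u \<in> V}) A' mu' x'"
proof -
  from assms(5) have A: "A \<in> S (V, E)" "DSpec V A \<subseteq> {0, 1, 2, 3}" "mu \<in> {1, 2}"
    "\<forall>i\<in>V. x i \<noteq> 0" "eigen_equation V A mu x"
    by (simp_all add: spectral_witness_def)
  have "\<exists>i\<in>V. x i \<noteq> 0" using A(4) assms(3) by blast
  then obtain c where c: "c \<noteq> 0" "(\<Sum>i\<in>V. (c * x i)\<^sup>2) = 1"
    using exists_unit_rescaling[OF assms(1)] by blast
  define b where "b = (\<lambda>i. c * x i)"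
  have b: "eigen_equation V A mu b" "(\<Sum>i\<in>V. (b i)\<^sup>2) = 1" "\<forall>i\<in>V. b i \<noteq> 0"
    using eigen_equation_scale[OF A(5)] c A(4) by (simp_all add: b_def)
  define d :: real where "d = 3 - 2 * mu"
  have d: "d\<^sup>2 = 1" "d \<noteq> 0" "mu + d \<in> {1, 2}"
    using A(3) by (auto simp: d_def)
  let ?A = "border v A b mu"
  have sym: "\<forall>i\<in>V. \<forall>j\<in>V. A i j = A j i" using A(1) by (simp add: mem_S_iff)
  have "?A \<in> S (insert v V, E \<union> {{v, u} | u. u \<in> V})"
    using border_in_S[OF assms(4,2) A(1) b(3)] .
  moreover have "DSpec (insert v V) ?A \<subseteq> {0, 1, 2, 3}"
  proof
    fix lam assume "lam \<in> DSpec (insert v V) ?A"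
    then have "is_eigenvalue V A lam \<or> (lam - mu)\<^sup>2 = 1"
      using is_eigenvalue_border[OF assms(1,4) sym b(1,2)] by (simp add: DSpec_def)
    then show "lam \<in> {0, 1, 2, 3}"
      using A(2,3) by (auto simp: DSpec_def power2_eq_1_iff)
  qed
  moreover have "eigen_equation (insert v V) ?A (mu + d) (b(v := d))"
    using eigen_equation_border[OF assms(1,4) b(1,2) d(1)] .
  moreover have "\<forall>i\<in>insert v V. (b(v := d)) i \<noteq> 0"
    using b(3) d(2) by simp
  ultimately have "spectral_witness (insert v V, E \<union> {{v, u} | u. u \<in> V}) ?A (mu + d) (b(v := d))"
    using d(3) unfolding spectral_witness_def verts_pair by (intro conjI) assumption+
  then show ?thesis by blast
qed

lemma threshold_spectral_witness: "threshold G \<Longrightarrow> \<exists>A mu x. spectral_witness G A mu x"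
proof (induction G rule: threshold.induct)
  case (single v)
  show ?case by (intro exI) (rule spectral_witness_single)
next
  case (isolated V E v)
  obtain A mu x where w: "spectral_witness (V, E) A mu x" using isolated.IH by blast
  have "finite V" "\<forall>e\<in>E. e \<subseteq> V"
    using threshold_finite[OF isolated.hyps(1)] threshold_edges_subset[OF isolated.hyps(1)]
    by simp_all
  from spectral_witness_isolated[OF this isolated.hyps(2) w] show ?case by (intro exI)
next
  case (dominating V E v)
  obtain A mu x where w: "spectral_witness (V, E) A mu x" using dominating.IH by blast
  have "finite V" "\<forall>e\<in>E. e \<subseteq> V" "V \<noteq> {}"
    using threshold_finite[OF dominating.hyps(1)] threshold_edges_subset[OF dominating.hyps(1)]
      threshold_nonempty[OF dominating.hyps(1)]
    by simp_all
  from spectral_witness_dominating[OF this dominating.hyps(2) w] show ?case .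
qed

lemma graph_Union_0: "graph_Union 0 Gs = ({}, {})"
  by (simp add: graph_Union_def)

lemma graph_Union_Suc:
  "graph_Union (Suc l) Gs =
     (verts (graph_Union l Gs) \<union> verts (Gs l), edges (graph_Union l Gs) \<union> edges (Gs l))"
  by (simp add: graph_Union_def verts_def edges_def lessThan_Suc Un_commute)

lemma verts_graph_Union: "verts (graph_Union l Gs) = (\<Union>i<l. verts (Gs i))"
  and edges_graph_Union: "edges (graph_Union l Gs) = (\<Union>i<l. edges (Gs i))"
  by (simp_all add: graph_Union_def)

lemma graph_Union_realization:
  assumes "\<And>i. i < l \<Longrightarrow> finite (verts (Gs i))"
    and "\<And>i. i < l \<Longrightarrow> \<forall>e\<in>edges (Gs i). e \<subseteq> verts (Gs i)"
    and "\<And>i. i < l \<Longrightarrow> \<exists>A\<in>S (Gs i). DSpec (verts (Gs i)) A \<subseteq> \<Lambda>"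
    and "\<And>i j. i < l \<Longrightarrow> j < l \<Longrightarrow> i \<noteq> j \<Longrightarrow> verts (Gs i) \<inter> verts (Gs j) = {}"
  shows "\<exists>A\<in>S (graph_Union l Gs). DSpec (verts (graph_Union l Gs)) A \<subseteq> \<Lambda>"
  using assms
proof (induction l)
  case 0
  show ?case unfolding graph_Union_0
    by (intro bexI[of _ "\<lambda>_ _. 0"]) (simp_all add: DSpec_empty mem_S_iff)
next
  case (Suc l)
  let ?V = "verts (graph_Union l Gs)" and ?E = "edges (graph_Union l Gs)"
  have "\<exists>A\<in>S (graph_Union l Gs). DSpec ?V A \<subseteq> \<Lambda>"
    by (rule Suc.IH) (simp_all add: Suc.prems)
  then obtain A where A: "A \<in> S (?V, ?E)" "DSpec ?V A \<subseteq> \<Lambda>"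
    by (auto simp: S_def)
  obtain B where B: "B \<in> S (verts (Gs l), edges (Gs l))" "DSpec (verts (Gs l)) B \<subseteq> \<Lambda>"
    using Suc.prems(3)[of l] by (auto simp: S_def)
  have fin: "finite ?V" "finite (verts (Gs l))"
    using Suc.prems(1) by (simp_all add: verts_graph_Union)
  have sub_V: "\<forall>e\<in>?E. e \<subseteq> ?V"
  proof
    fix e assume "e \<in> ?E"
    then obtain i where "i < l" "e \<in> edges (Gs i)" by (auto simp: edges_graph_Union)
    then show "e \<subseteq> ?V" using Suc.prems(2)[of i] by (auto simp: verts_graph_Union)
  qed
  have sub_l: "\<forall>e\<in>edges (Gs l). e \<subseteq> verts (Gs l)"
    using Suc.prems(2)[of l] by simp
  have "verts (Gs i) \<inter> verts (Gs l) = {}" if "i < l" for i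
    using Suc.prems(4)[of i l] that by simp
  then have disj: "?V \<inter> verts (Gs l) = {}"
    by (auto simp: verts_graph_Union)
  have "block_sum ?V A B \<in> S (graph_Union (Suc l) Gs)"
    unfolding graph_Union_Suc using block_sum_in_S[OF disj sub_V sub_l A(1) B(1)] .
  moreover have "DSpec (verts (graph_Union (Suc l) Gs)) (block_sum ?V A B) \<subseteq> \<Lambda>"
    unfolding graph_Union_Suc verts_pair using DSpec_block_sum[OF fin disj] A(2) B(2) by blast
  ultimately show ?case by blast
qed

lemma q_le_card:
  assumes "A \<in> S G" "finite \<Lambda>" "DSpec (verts G) A \<subseteq> \<Lambda>"
  shows "q G \<le> card \<Lambda>"
proof -
  have "q G \<le> card (DSpec (verts G) A)"
    unfolding q_def using assms(1) by (intro Least_le) blast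
  also have "\<dots> \<le> card \<Lambda>"
    using assms(2,3) by (rule card_mono)
  finally show ?thesis .
qed

theorem mainTheorem2:
  fixes l :: nat and Gs :: "nat \<Rightarrow> 'a graph"
  assumes "\<forall>i<l. threshold (Gs i)"
    and "\<forall>i<l. \<forall>j<l. i \<noteq> j \<longrightarrow> verts (Gs i) \<inter> verts (Gs j) = {}"
  shows "q (graph_Union l Gs) \<le> 4"
proof -
  have "\<exists>A\<in>S (graph_Union l Gs). DSpec (verts (graph_Union l Gs)) A \<subseteq> {0, 1, 2, 3}"
  proof (rule graph_Union_realization)
    fix i assume "i < l"
    then have th: "threshold (Gs i)" using assms(1) by blast
    then show "finite (verts (Gs i))" "\<forall>e\<in>edges (Gs i). e \<subseteq> verts (Gs i)"
      by (simp_all add: threshold_finite threshold_edges_subset)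
    obtain A mu x where "spectral_witness (Gs i) A mu x"
      using threshold_spectral_witness[OF th] by blast
    then show "\<exists>A\<in>S (Gs i). DSpec (verts (Gs i)) A \<subseteq> {0, 1, 2, 3}"
      unfolding spectral_witness_def by blast
  qed (use assms(2) in blast)
  then obtain A where "A \<in> S (graph_Union l Gs)"
    "DSpec (verts (graph_Union l Gs)) A \<subseteq> {0, 1, 2, 3}"
    by blast
  then have "q (graph_Union l Gs) \<le> card {0, 1, 2, 3 :: real}"
    by (intro q_le_card) simp_all
  then show ?thesis by simp
qed

end
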